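(* Let $\psi$ be a DoR fairness property, let $l,u$ be welfare bounds with $u-l\le\kappa$, and let $\pi$ be a Static-BW shield (with period $T$ and welfare bounds $l,u$). Let $\tau=\tau_1\cdots\tau_m\in\mathtt{FT}^{mT}_{\theta,\pi}$ with $|\tau_i|=T$ for each $i\le m$. If every $\tau_i$ is $N$-balanced w.r.t. $\mathtt{den}^a$ and $\mathtt{den}^b$ for $N=\lceil 1/(u-l)\rceil$, then $\psi(\tau)\le\kappa$.
   Context: Input space $\mathcal{X}=\{a,b\}\times\{0,1\}\times\mathbb{C}$ ($\mathbb{C}\subset\mathbb{R}_{\ge0}$ finite; $x=(g,r,c)$ = group, recommendation, cost), output space $\mathcal{Y}=\{0,1\}$, input distribution $\theta$, threshold $\kappa$. Shields $\pi:(\mathcal{X}\times\mathcal{Y})^*\times\mathcal{X}\to\mathcal{Y}$, set $\Pi$. $\mathtt{FT}^t_{\theta,\pi}$: traces of length $t$ with $\theta(x_i)>0$ and $y_i=\pi(\text{prefix},x_i)$. $\mathit{cost}(\tau)=\sum c_i\mathbb{1}[r_i\neq y_i]$; $\mathbb{E}[\mathit{cost};\theta,\pi,T]=\sum_{\tau\in(\mathcal{X}\times\mathcal{Y})^T}\mathit{cost}(\tau)\prod\theta(x_i)\mathbb{1}[\tau\in\mathtt{FT}^T_{\theta,\pi}]$. DoR: $\mathtt{WF}^g=\mathtt{num}^g/\mathtt{den}^g$ with $\mathtt{num}^g,\mathtt{den}^g$ additive single-counter statistics (traces $\to\mathbb{N}$, $\mu(\tau\tau')=\mu(\tau)+\mu(\tau')$),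 $\psi=|\mathtt{WF}^a-\mathtt{WF}^b|$. A length-$T$ trace is $N$-balanced w.r.t. $\mathtt{den}^a,\mathtt{den}^b$ if both are $\ge N$; $\mathtt{BT}^T_N$ is the set of such traces. $\Pi_{\mathtt{BW}}^{\theta,T,N}=\{\pi\in\Pi:\forall\tau\in\mathtt{FT}^T_{\theta,\pi}\cap\mathtt{BT}^T_N,\ \forall g,\ l\le\mathtt{WF}^g(\tau)\le u\}$. A Static-BW shield is the concatenation of infinitely many copies of $\pi^*\in\arg\min_{\pi\in\Pi_{\mathtt{BW}}^{\theta,T,N}}\mathbb{E}[\mathit{cost};\theta,\pi,T]$ with $N=\lceil 1/(u-l)\rceil$, where the concatenation of $\pi_1,\pi_2,\dots$ is the shield $\pi$ with $\pi(\tau\tau',x)=\pi_{j+1}(\tau',x)$ whenever $|\tau|=jT$, $|\tau'|<T$. *)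

theory Defs
  imports Complex_Main
begin

datatype grp = GA | GB

text \<open>Inputs x = (g, r, c): group, recommendation (0/1 as bool), cost.\<close>
type_synonym inp = "grp \<times> bool \<times> real"
type_synonym trace = "(inp \<times> bool) list"
type_synonym shield = "trace \<Rightarrow> inp \<Rightarrow> bool"

definition rec_of :: "inp \<Rightarrow> bool" where "rec_of x = fst (snd x)"
definition cost_of :: "inp \<Rightarrow> real" where "cost_of x = snd (snd x)"

definition input_dist :: "real set \<Rightarrow> (inp \<Rightarrow> real) \<Rightarrow> bool" where
  "input_dist C \<theta> \<longleftrightarrow> finite C \<and> (\<forall>c\<in>C. 0 \<le> c) \<and> (\<forall>x. 0 \<le> \<theta> x)
     \<and> (\<forall>x. 0 < \<theta> x \<longrightarrow> cost_of x \<in> C)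
     \<and> finite {x. 0 < \<theta> x} \<and> (\<Sum>x\<in>{x. 0 < \<theta> x}. \<theta> x) = 1"

definition FT :: "(inp \<Rightarrow> real) \<Rightarrow> shield \<Rightarrow> nat \<Rightarrow> trace set" where
  "FT \<theta> \<pi> t = {\<tau>. length \<tau> = t \<and>
     (\<forall>i<t. 0 < \<theta> (fst (\<tau>!i)) \<and> snd (\<tau>!i) = \<pi> (take i \<tau>) (fst (\<tau>!i)))}"

definition cost :: "trace \<Rightarrow> real" where
  "cost \<tau> = (\<Sum>i<length \<tau>. (if rec_of (fst (\<tau>!i)) \<noteq> snd (\<tau>!i) then cost_of (fst (\<tau>!i)) else 0))"

text \<open>Expected cost; the sum over all traces of length T reduces to the (finite) set FT,
  since all other summands are zero.\<close>
definition exp_cost :: "(inp \<Rightarrow> real) \<Rightarrow> shield \<Rightarrow> nat \<Rightarrow> real" where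
  "exp_cost \<theta> \<pi> T = (\<Sum>\<tau>\<in>FT \<theta> \<pi> T. cost \<tau> * (\<Prod>i<T. \<theta> (fst (\<tau>!i))))"

definition additive_stat :: "(trace \<Rightarrow> nat) \<Rightarrow> bool" where
  "additive_stat \<mu> \<longleftrightarrow> (\<forall>\<tau> \<tau>'. \<mu> (\<tau> @ \<tau>') = \<mu> \<tau> + \<mu> \<tau>')"

definition WF :: "(grp \<Rightarrow> trace \<Rightarrow> nat) \<Rightarrow> (grp \<Rightarrow> trace \<Rightarrow> nat) \<Rightarrow> grp \<Rightarrow> trace \<Rightarrow> real" where
  "WF num den g \<tau> = real (num g \<tau>) / real (den g \<tau>)"

definition psi :: "(grp \<Rightarrow> trace \<Rightarrow> nat) \<Rightarrow> (grp \<Rightarrow> trace \<Rightarrow> nat) \<Rightarrow> trace \<Rightarrow> real" where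
  "psi num den \<tau> = \<bar>WF num den GA \<tau> - WF num den GB \<tau>\<bar>"

definition balanced :: "(grp \<Rightarrow> trace \<Rightarrow> nat) \<Rightarrow> nat \<Rightarrow> trace \<Rightarrow> bool" where
  "balanced den N \<tau> \<longleftrightarrow> N \<le> den GA \<tau> \<and> N \<le> den GB \<tau>"

definition Pi_BW :: "(inp \<Rightarrow> real) \<Rightarrow> nat \<Rightarrow> nat \<Rightarrow> (grp \<Rightarrow> trace \<Rightarrow> nat) \<Rightarrow> (grp \<Rightarrow> trace \<Rightarrow> nat)
    \<Rightarrow> real \<Rightarrow> real \<Rightarrow> shield set" where
  "Pi_BW \<theta> T N num den l u = {\<pi>. \<forall>\<tau>\<in>FT \<theta> \<pi> T. balanced den N \<tau> \<longrightarrow>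
      (\<forall>g. l \<le> WF num den g \<tau> \<and> WF num den g \<tau> \<le> u)}"

text \<open>Concatenation of shields \<pi>s 0, \<pi>s 1, ... with period T:
  \<pi>(\<tau>\<tau>', x) = \<pi>s j (\<tau>', x) whenever |\<tau>| = jT and |\<tau>'| < T.\<close>
definition concat_shields :: "nat \<Rightarrow> (nat \<Rightarrow> shield) \<Rightarrow> shield" where
  "concat_shields T \<pi>s h x = \<pi>s (length h div T) (drop (length h div T * T) h) x"

definition BW_N :: "real \<Rightarrow> real \<Rightarrow> nat" where
  "BW_N l u = nat \<lceil>1 / (u - l)\<rceil>"

definition static_BW :: "(inp \<Rightarrow> real) \<Rightarrow> nat \<Rightarrow> (grp \<Rightarrow> trace \<Rightarrow> nat) \<Rightarrow> (grp \<Rightarrow> trace \<Rightarrow> nat)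
    \<Rightarrow> real \<Rightarrow> real \<Rightarrow> shield \<Rightarrow> bool" where
  "static_BW \<theta> T num den l u \<pi> \<longleftrightarrow> 0 < T \<and>
     (\<exists>p. p \<in> Pi_BW \<theta> T (BW_N l u) num den l u
        \<and> (\<forall>p'\<in>Pi_BW \<theta> T (BW_N l u) num den l u. exp_cost \<theta> p T \<le> exp_cost \<theta> p' T)
        \<and> \<pi> = concat_shields T (\<lambda>_. p))"

end

theory Submission
  imports Defs
begin

text \<open>A Static-BW shield restarts the optimal one-period shield p every T steps, so each
  length-T block of a feasible trace is a feasible trace of p. A balanced block has positive
  denominators (N \<ge> 1), hence both of its welfare ratios lie in [l, u]. Since numerators and
  denominators are additive, the welfare ratio of the whole trace is a mediant of the block
  ratios and stays in [l, u]; so the two groups differ by at most u - l \<le> \<kappa>.\<close>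

lemma additive_stat_Nil: "additive_stat \<mu> \<Longrightarrow> \<mu> [] = 0"
  unfolding additive_stat_def by (metis append_Nil add_cancel_right_left)

lemma additive_stat_concat: "additive_stat \<mu> \<Longrightarrow> \<mu> (concat bs) = (\<Sum>b\<leftarrow>bs. \<mu> b)"
  by (induction bs) (auto simp: additive_stat_Nil additive_stat_def)

lemma concat_shields_const_short:
  "length h < T \<Longrightarrow> concat_shields T (\<lambda>_. p) h x = p h x"
  unfolding concat_shields_def by simp

lemma concat_shields_const_append_period:
  assumes "length pre = T" "0 < T"
  shows "concat_shields T (\<lambda>_. p) (pre @ h) x = concat_shields T (\<lambda>_. p) h x"
proof -
  have "length (pre @ h) div T = Suc (length h div T)"
    using assms by (simp add: add.commute)
  moreover have "drop (Suc (length h div T) * T) (pre @ h) = drop (length h div T * T) h"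
    using assms by (simp add: add.commute)
  ultimately show ?thesis
    unfolding concat_shields_def by simp
qed

lemma FT_concat_shields_const_append:
  assumes "length b = T" "0 < T"
    and "b @ t \<in> FT \<theta> (concat_shields T (\<lambda>_. p)) (T + n)"
  shows "b \<in> FT \<theta> p T" and "t \<in> FT \<theta> (concat_shields T (\<lambda>_. p)) n"
proof -
  let ?\<pi> = "concat_shields T (\<lambda>_. p)"
  have len: "length t = n"
    using assms(1,3) unfolding FT_def by simp
  have step: "0 < \<theta> (fst ((b @ t) ! i)) \<and>
      snd ((b @ t) ! i) = ?\<pi> (take i (b @ t)) (fst ((b @ t) ! i))" if "i < T + n" for i
    using assms(3) that unfolding FT_def by blast
  have "0 < \<theta> (fst (b ! i)) \<and> snd (b ! i) = p (take i b) (fst (b ! i))" if "i < T" for i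
    using step[of i] that assms(1) by (simp add: nth_append concat_shields_const_short)
  then show "b \<in> FT \<theta> p T"
    unfolding FT_def using assms(1) by blast
  have "0 < \<theta> (fst (t ! i)) \<and> snd (t ! i) = ?\<pi> (take i t) (fst (t ! i))" if "i < n" for i
    using step[of "T + i"] that assms(1)
    by (simp add: nth_append concat_shields_const_append_period[OF _ assms(2)])
  then show "t \<in> FT \<theta> ?\<pi> n"
    unfolding FT_def using len by blast
qed

lemma FT_concat_shields_const_blocks:
  assumes "0 < T" "\<forall>b\<in>set bs. length b = T"
    and "concat bs \<in> FT \<theta> (concat_shields T (\<lambda>_. p)) (length bs * T)"
  shows "\<forall>b\<in>set bs. b \<in> FT \<theta> p T"
  using assms(2,3)
proof (induction bs)
  case Nil
  then show ?case by simp
next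
  case (Cons b bs)
  have len_b: "length b = T"
    using Cons.prems(1) by simp
  have "b @ concat bs \<in> FT \<theta> (concat_shields T (\<lambda>_. p)) (T + length bs * T)"
    using Cons.prems(2) by simp
  note head_and_rest = FT_concat_shields_const_append[OF len_b assms(1) this]
  show ?case
    using head_and_rest Cons.IH Cons.prems(1) by simp
qed

lemma mediant_bounds_concat:
  fixes l u :: real
  assumes "additive_stat n" "additive_stat d"
    and "\<forall>b\<in>set bs. l * d b \<le> n b \<and> n b \<le> u * d b"
  shows "l * d (concat bs) \<le> n (concat bs) \<and> n (concat bs) \<le> u * d (concat bs)"
  using assms(3)
proof (induction bs)
  case Nil
  then show ?case
    using additive_stat_Nil[OF assms(1)] additive_stat_Nil[OF assms(2)] by simp
next
  case (Cons b bs)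
  have "n (concat (b # bs)) = n b + n (concat bs)" "d (concat (b # bs)) = d b + d (concat bs)"
    using assms(1,2) unfolding additive_stat_def by auto
  with Cons show ?case
    by (simp add: distrib_left)
qed

lemma WF_bounds_iff:
  "0 < den g \<tau> \<Longrightarrow> (l \<le> WF num den g \<tau> \<and> WF num den g \<tau> \<le> u) \<longleftrightarrow>
     (l * den g \<tau> \<le> num g \<tau> \<and> num g \<tau> \<le> u * den g \<tau>)"
  unfolding WF_def by (simp add: pos_le_divide_eq pos_divide_le_eq)

lemma WF_bounds_concat:
  assumes "additive_stat (num g)" "additive_stat (den g)" "bs \<noteq> []"
    and "\<forall>b\<in>set bs. 0 < den g b \<and> l \<le> WF num den g b \<and> WF num den g b \<le> u"
  shows "l \<le> WF num den g (concat bs) \<and> WF num den g (concat bs) \<le> u"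
proof -
  have den_pos: "0 < den g (concat bs)"
    using assms(3,4) additive_stat_concat[OF assms(2), of bs] by (cases bs) auto
  have "l * den g b \<le> num g b \<and> num g b \<le> u * den g b" if "b \<in> set bs" for b
    using assms(4) that by (intro WF_bounds_iff[THEN iffD1]) auto
  then have "l * den g (concat bs) \<le> num g (concat bs) \<and>
      num g (concat bs) \<le> u * den g (concat bs)"
    using mediant_bounds_concat[OF assms(1,2)] by blast
  then show ?thesis
    using WF_bounds_iff[where den = den and g = g, OF den_pos] by blast
qed

lemma BW_N_pos: "l < u \<Longrightarrow> 0 < BW_N l u"
  unfolding BW_N_def by simp

theorem theorem6p3:
  fixes C :: "real set" and \<theta> :: "inp \<Rightarrow> real" and \<kappa> l u :: real and T :: nat
    and num den :: "grp \<Rightarrow> trace \<Rightarrow> nat" and \<pi> :: shield and blocks :: "trace list"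
  assumes "input_dist C \<theta>"
    and "\<forall>g. additive_stat (num g) \<and> additive_stat (den g)"
    and "l < u" and "u - l \<le> \<kappa>"
    and "static_BW \<theta> T num den l u \<pi>"
    and "concat blocks \<in> FT \<theta> \<pi> (length blocks * T)"
    and "\<forall>b\<in>set blocks. length b = T"
    and "\<forall>b\<in>set blocks. balanced den (BW_N l u) b"
  shows "psi num den (concat blocks) \<le> \<kappa>"
proof (cases "blocks = []")
  case True
  \<comment> \<open>both welfare ratios of the empty trace are 0 / 0 = 0\<close>
  then show ?thesis
    using additive_stat_Nil[of "den _"] assms(2,3,4) by (simp add: psi_def WF_def)
next
  case False
  obtain p where "0 < T" and p_BW: "p \<in> Pi_BW \<theta> T (BW_N l u) num den l u"
    and "\<pi> = concat_shields T (\<lambda>_. p)"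
    using assms(5) unfolding static_BW_def by blast
  then have "\<forall>b\<in>set blocks. b \<in> FT \<theta> p T"
    using FT_concat_shields_const_blocks assms(6,7) by blast
  then have "\<forall>b\<in>set blocks. 0 < den g b \<and> l \<le> WF num den g b \<and> WF num den g b \<le> u" for g
    using p_BW assms(8) BW_N_pos[OF assms(3)] unfolding Pi_BW_def balanced_def
    by (cases g) fastforce+
  then have "l \<le> WF num den g (concat blocks) \<and> WF num den g (concat blocks) \<le> u" for g
    using WF_bounds_concat assms(2) False by blast
  from this[of GA] this[of GB] show ?thesis
    using assms(4) unfolding psi_def by linarith
qed

end
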